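(* In the converse setting below, if $I(W_1;Y_2^nS^n\Theta_C)<\epsilon$, then \[ \sum_{i=1}^n I(X_i;W_1\mid Y_2^{i-1}S^{i-1})\ <\ \frac{\epsilon}{1-\delta_2}. \]
   Context: Converse setting. $0<\delta_1,\delta_2<1$, $\epsilon>0$. Messages $W_1$ uniform on $\mathbb{F}_q^{LN_1}$ and $W_2$ uniform on $\mathbb{F}_q^{LN_2}$, Alice's private randomness $\Theta_A$ and Calvin's private randomness $\Theta_C$ are mutually independent. Channel states $S_1,\dots,S_n\in\{B,C,BC,\emptyset\}$ are i.i.d., independent of all these, with Bob receiving with probability $1-\delta_1$ and Calvin with probability $1-\delta_2$, independently. Inputs $X_i=f_i(W_1,W_2,\Theta_A,S^{i-1})\in\mathbb{F}_q^L$ (honest acknowledgments). Outputs: $Y_{1,i}=X_i$ if Bob receives packet $i$, else $\perp$; $Y_{2,i}=X_i$ if Calvin receives packet $i$, else $\perp$. $V^i=(V_1,\dots,V_i)$ ($V^0$ empty). *)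

theory Defs
  imports "HOL-Probability.Probability"
begin

text \<open>Channel state of one packet: a pair (Bob receives, Calvin receives).
  The four states B, C, BC, empty correspond to (True,False), (False,True),
  (True,True), (False,False).\<close>
definition state_pmf :: "real \<Rightarrow> real \<Rightarrow> (bool \<times> bool) pmf" where
  "state_pmf d1 d2 = pair_pmf (bernoulli_pmf (1 - d1)) (bernoulli_pmf (1 - d2))"

text \<open>Joint distribution of (W1, W2, Theta_A, Theta_C, S), all mutually independent;
  W1 uniform on F_q^(L N1), W2 uniform on F_q^(L N2) (vectors as lists of that length),
  S_1, ..., S_n i.i.d. with law state_pmf (S is a function on indices 1..n).\<close>
definition conv_space ::
  "nat \<Rightarrow> nat \<Rightarrow> nat \<Rightarrow> real \<Rightarrow> real \<Rightarrow> 'ta pmf \<Rightarrow> 'tc pmf \<Rightarrow> nat \<Rightarrow>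
   ('f::{finite,field} list \<times> 'f list \<times> 'ta \<times> 'tc \<times> (nat \<Rightarrow> bool \<times> bool)) pmf" where
  "conv_space L N1 N2 d1 d2 PA PC n =
     pair_pmf (pmf_of_set {w. length w = L * N1})
      (pair_pmf (pmf_of_set {w. length w = L * N2})
        (pair_pmf PA (pair_pmf PC (Pi_pmf {1..n} (False, False) (\<lambda>_. state_pmf d1 d2)))))"

definition W1 :: "('f list \<times> 'f list \<times> 'ta \<times> 'tc \<times> (nat \<Rightarrow> bool \<times> bool)) \<Rightarrow> 'f list" where
  "W1 \<omega> = fst \<omega>"

definition ThC :: "('f list \<times> 'f list \<times> 'ta \<times> 'tc \<times> (nat \<Rightarrow> bool \<times> bool)) \<Rightarrow> 'tc" where
  "ThC \<omega> = fst (snd (snd (snd \<omega>)))"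

definition S_upto :: "('f list \<times> 'f list \<times> 'ta \<times> 'tc \<times> (nat \<Rightarrow> bool \<times> bool)) \<Rightarrow> nat \<Rightarrow> (bool \<times> bool) list" where
  "S_upto \<omega> k = map (snd (snd (snd (snd \<omega>)))) [1..<Suc k]"

text \<open>X_i = f_i(W1, W2, Theta_A, S^(i-1)).\<close>
definition Xin ::
  "(nat \<Rightarrow> 'f list \<Rightarrow> 'f list \<Rightarrow> 'ta \<Rightarrow> (bool \<times> bool) list \<Rightarrow> 'f list) \<Rightarrow>
   ('f list \<times> 'f list \<times> 'ta \<times> 'tc \<times> (nat \<Rightarrow> bool \<times> bool)) \<Rightarrow> nat \<Rightarrow> 'f list" where
  "Xin f \<omega> i = f i (fst \<omega>) (fst (snd \<omega>)) (fst (snd (snd \<omega>))) (S_upto \<omega> (i - 1))"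

text \<open>Calvin's output Y_{2,i}: Some X_i if Calvin receives packet i, None (= bottom) otherwise.\<close>
definition Y2 ::
  "(nat \<Rightarrow> 'f list \<Rightarrow> 'f list \<Rightarrow> 'ta \<Rightarrow> (bool \<times> bool) list \<Rightarrow> 'f list) \<Rightarrow>
   ('f list \<times> 'f list \<times> 'ta \<times> 'tc \<times> (nat \<Rightarrow> bool \<times> bool)) \<Rightarrow> nat \<Rightarrow> 'f list option" where
  "Y2 f \<omega> i = (if snd (snd (snd (snd (snd \<omega>))) i) then Some (Xin f \<omega> i) else None)"

definition Y2_upto ::
  "(nat \<Rightarrow> 'f list \<Rightarrow> 'f list \<Rightarrow> 'ta \<Rightarrow> (bool \<times> bool) list \<Rightarrow> 'f list) \<Rightarrow>
   ('f list \<times> 'f list \<times> 'ta \<times> 'tc \<times> (nat \<Rightarrow> bool \<times> bool)) \<Rightarrow> nat \<Rightarrow> 'f list option list" where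
  "Y2_upto f \<omega> k = map (Y2 f \<omega>) [1..<Suc k]"

end

theory Submission
  imports Defs
begin

text \<open>
  Write \<open>T k = I(W1; Y2^k S^k)\<close> for Calvin's information about \<open>W1\<close> after \<open>k\<close> packets.
  Packet \<open>k + 1\<close> reaches Calvin through an erasure channel whose state \<open>S_{k+1}\<close> is
  independent of everything that determines \<open>X_{k+1}\<close>, and a direct entropy computation gives
  \<open>T (k + 1) - T k = (1 - \<delta>2) I(X_{k+1}; W1 | Y2^k S^k)\<close>.  Hence the sum in the theorem
  telescopes to \<open>(T n - T 0) / (1 - \<delta>2)\<close>; here \<open>T 0 = 0\<close>, and \<open>T n < \<epsilon>\<close> because
  Calvin's randomness \<open>\<Theta>C\<close> is independent of \<open>(W1, Y2^n, S^n)\<close>.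
\<close>

abbreviation MI :: "real \<Rightarrow> 'o pmf \<Rightarrow> ('o \<Rightarrow> 'x) \<Rightarrow> ('o \<Rightarrow> 'y) \<Rightarrow> real" where
  "MI b p X Y \<equiv> prob_space.mutual_information (measure_pmf p) b
     (count_space UNIV) (count_space UNIV) X Y"

abbreviation CMI :: "real \<Rightarrow> 'o pmf \<Rightarrow> ('o \<Rightarrow> 'x) \<Rightarrow> ('o \<Rightarrow> 'y) \<Rightarrow> ('o \<Rightarrow> 'z) \<Rightarrow> real" where
  "CMI b p X Y Z \<equiv> prob_space.conditional_mutual_information (measure_pmf p) b
     (count_space UNIV) (count_space UNIV) (count_space UNIV) X Y Z"

lemma mutual_information_pmf:
  fixes p :: "'o pmf" and X :: "'o \<Rightarrow> 'x::countable" and Y :: "'o \<Rightarrow> 'y::countable"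
  assumes b: "1 < b"
  shows "MI b p X Y = measure_pmf.expectation p (\<lambda>\<omega>.
           log b (pmf (map_pmf (\<lambda>\<omega>. (X \<omega>, Y \<omega>)) p) (X \<omega>, Y \<omega>) /
                  (pmf (map_pmf X p) (X \<omega>) * pmf (map_pmf Y p) (Y \<omega>))))"
proof -
  interpret information_space "measure_pmf p" b by standard (rule b)
  let ?Pxy = "pmf (map_pmf (\<lambda>\<omega>. (X \<omega>, Y \<omega>)) p)"
  let ?Px = "pmf (map_pmf X p)" and ?Py = "pmf (map_pmf Y p)"
  have cs: "count_space UNIV \<Otimes>\<^sub>M count_space UNIV = (count_space UNIV :: ('x \<times> 'y) measure)"
    by (simp add: pair_measure_countable)
  have distr: "distributed (measure_pmf p) (count_space UNIV) Z (pmf (map_pmf Z p))"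
    for Z :: "'o \<Rightarrow> 'z::countable"
  proof -
    have "distr (measure_pmf p) (count_space UNIV) Z
          = density (count_space UNIV) (pmf (map_pmf Z p))"
      by (metis map_pmf_rep_eq measure_pmf_eq_density)
    then show ?thesis unfolding distributed_def by auto
  qed
  have "MI b p X Y = integral\<^sup>L (count_space UNIV \<Otimes>\<^sub>M count_space UNIV)
          (\<lambda>z. ?Pxy z * log b (?Pxy z / (?Px (fst z) * ?Py (snd z))))"
    by (rule mutual_information_distr)
       (auto intro!: sigma_finite_measure_count_space_countable simp: cs distr)
  also have "\<dots> = integral\<^sup>L (measure_pmf (map_pmf (\<lambda>\<omega>. (X \<omega>, Y \<omega>)) p))
                    (\<lambda>z. log b (?Pxy z / (?Px (fst z) * ?Py (snd z))))"
    by (simp add: cs measure_pmf_eq_density[of "map_pmf _ p"] integral_density)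
  finally show ?thesis by simp
qed

text \<open>The negative entropy \<open>-H(r)\<close> of a discrete distribution; working with it avoids
  sign clutter in the entropy bookkeeping below.\<close>
definition neg_entropy :: "real \<Rightarrow> 'a pmf \<Rightarrow> real" where
  "neg_entropy b r = measure_pmf.expectation r (\<lambda>v. log b (pmf r v))"

lemma neg_entropy_map_inj: "inj g \<Longrightarrow> neg_entropy b (map_pmf g r) = neg_entropy b r"
  unfolding neg_entropy_def by (simp add: pmf_map_inj')

lemma pmf_map_pmf_pos: "\<omega> \<in> set_pmf p \<Longrightarrow> 0 < pmf (map_pmf Z p) (Z \<omega>)"
  by (simp add: pmf_positive)

lemma integrable_log_pmf_map:
  assumes "finite (Z ` set_pmf p)"
  shows "integrable p (\<lambda>\<omega>. log b (pmf (map_pmf Z p) (Z \<omega>)))"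
proof -
  have "integrable (map_pmf Z p) (\<lambda>z. log b (pmf (map_pmf Z p) z))"
    by (rule integrable_measure_pmf_finite) (use assms in simp)
  then show ?thesis by simp
qed

lemma mutual_information_neg_entropy:
  fixes p :: "'o pmf" and X :: "'o \<Rightarrow> 'x::countable" and Y :: "'o \<Rightarrow> 'y::countable"
  assumes b: "1 < b" and fin_X: "finite (X ` set_pmf p)" and fin_Y: "finite (Y ` set_pmf p)"
  shows "MI b p X Y = neg_entropy b (map_pmf (\<lambda>\<omega>. (X \<omega>, Y \<omega>)) p)
                      - neg_entropy b (map_pmf X p) - neg_entropy b (map_pmf Y p)"
proof -
  let ?XY = "\<lambda>\<omega>. (X \<omega>, Y \<omega>)"
  let ?l = "\<lambda>Z \<omega>. log b (pmf (map_pmf Z p) (Z \<omega>))"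
  have fin_XY: "finite (?XY ` set_pmf p)"
    by (rule finite_subset[OF _ finite_cartesian_product[OF fin_X fin_Y]]) auto
  have "MI b p X Y = measure_pmf.expectation p (\<lambda>\<omega>. ?l ?XY \<omega> - ?l X \<omega> - ?l Y \<omega>)"
    unfolding mutual_information_pmf[OF b]
  proof (rule integral_cong_AE[OF _ _ AE_pmfI])
    fix \<omega> assume "\<omega> \<in> set_pmf p"
    then show "log b (pmf (map_pmf ?XY p) (?XY \<omega>) /
                 (pmf (map_pmf X p) (X \<omega>) * pmf (map_pmf Y p) (Y \<omega>)))
               = ?l ?XY \<omega> - ?l X \<omega> - ?l Y \<omega>"
      using pmf_map_pmf_pos[of \<omega> p ?XY] pmf_map_pmf_pos[of \<omega> p X] pmf_map_pmf_pos[of \<omega> p Y]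
      by (simp add: log_divide log_mult)
  qed simp_all
  also have "\<dots> = measure_pmf.expectation p (?l ?XY) - measure_pmf.expectation p (?l X)
                   - measure_pmf.expectation p (?l Y)"
    using integrable_log_pmf_map[OF fin_XY] integrable_log_pmf_map[OF fin_X]
      integrable_log_pmf_map[OF fin_Y]
    by (simp add: Bochner_Integration.integral_diff)
  finally show ?thesis unfolding neg_entropy_def by simp
qed

lemma mutual_information_const:
  fixes p :: "'o pmf" and X :: "'o \<Rightarrow> 'x::countable" and c :: "'y::countable"
  assumes b: "1 < b"
  shows "MI b p X (\<lambda>\<omega>. c) = 0"
proof -
  have joint: "map_pmf (\<lambda>\<omega>. (X \<omega>, c)) p = map_pmf (\<lambda>x. (x, c)) (map_pmf X p)"
    by (simp add: map_pmf_comp)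
  have "inj (\<lambda>x. (x, c))" by (auto simp: inj_def)
  then have "pmf (map_pmf (\<lambda>\<omega>. (X \<omega>, c)) p) (X \<omega>, c) = pmf (map_pmf X p) (X \<omega>)" for \<omega>
    unfolding joint by (rule pmf_map_inj')
  moreover have "pmf (map_pmf (\<lambda>\<omega>. c) p) c = 1" by simp
  ultimately show ?thesis
    unfolding mutual_information_pmf[OF b]
    by (subst integral_cong_AE[where g="\<lambda>_. 0", OF _ _ AE_pmfI])
       (auto dest: pmf_map_pmf_pos[of _ p X])
qed

lemma mutual_information_inj_right:
  fixes p :: "'o pmf" and X :: "'o \<Rightarrow> 'x::countable" and Y :: "'o \<Rightarrow> 'y::countable"
    and g :: "'y \<Rightarrow> 'z::countable"
  assumes b: "1 < b" and g: "inj g"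
  shows "MI b p X (\<lambda>\<omega>. g (Y \<omega>)) = MI b p X Y"
proof -
  have joint: "map_pmf (\<lambda>\<omega>. (X \<omega>, g (Y \<omega>))) p
               = map_pmf (map_prod id g) (map_pmf (\<lambda>\<omega>. (X \<omega>, Y \<omega>)) p)"
    and right: "map_pmf (\<lambda>\<omega>. g (Y \<omega>)) p = map_pmf g (map_pmf Y p)"
    by (simp_all add: map_pmf_comp)
  have "inj (map_prod id g)" using g by (auto simp: inj_def)
  then have "pmf (map_pmf (\<lambda>\<omega>. (X \<omega>, g (Y \<omega>))) p) (X \<omega>, g (Y \<omega>))
             = pmf (map_pmf (\<lambda>\<omega>. (X \<omega>, Y \<omega>)) p) (X \<omega>, Y \<omega>)" for \<omega>
    unfolding joint using pmf_map_inj' by fastforce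
  moreover have "pmf (map_pmf (\<lambda>\<omega>. g (Y \<omega>)) p) (g (Y \<omega>)) = pmf (map_pmf Y p) (Y \<omega>)" for \<omega>
    unfolding right by (rule pmf_map_inj'[OF g])
  ultimately show ?thesis unfolding mutual_information_pmf[OF b] by simp
qed

lemma mutual_information_indep_extra:
  fixes p :: "'o pmf" and X :: "'o \<Rightarrow> 'x::countable" and Y :: "'o \<Rightarrow> 'y::countable"
    and T :: "'o \<Rightarrow> 't::countable"
  assumes b: "1 < b"
    and indep: "map_pmf (\<lambda>\<omega>. ((X \<omega>, Y \<omega>), T \<omega>)) p = pair_pmf (map_pmf (\<lambda>\<omega>. (X \<omega>, Y \<omega>)) p) \<tau>"
  shows "MI b p X (\<lambda>\<omega>. (Y \<omega>, T \<omega>)) = MI b p X Y"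
proof -
  let ?XY = "map_pmf (\<lambda>\<omega>. (X \<omega>, Y \<omega>)) p"
  define assoc :: "('x \<times> 'y) \<times> 't \<Rightarrow> 'x \<times> 'y \<times> 't" where "assoc = (\<lambda>((x, y), t). (x, y, t))"
  have "inj assoc" by (auto simp: inj_def assoc_def)
  have joint: "map_pmf (\<lambda>\<omega>. (X \<omega>, Y \<omega>, T \<omega>)) p = map_pmf assoc (pair_pmf ?XY \<tau>)"
    unfolding indep[symmetric] map_pmf_comp by (simp add: assoc_def)
  have right: "map_pmf (\<lambda>\<omega>. (Y \<omega>, T \<omega>)) p = pair_pmf (map_pmf Y p) \<tau>"
  proof -
    have "map_pmf (\<lambda>\<omega>. (Y \<omega>, T \<omega>)) p = map_pmf (\<lambda>(a, t). (snd a, id t)) (pair_pmf ?XY \<tau>)"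
      unfolding indep[symmetric] map_pmf_comp by simp
    then show ?thesis by (simp add: map_pair map_pmf_comp)
  qed
  show ?thesis
    unfolding mutual_information_pmf[OF b]
  proof (rule integral_cong_AE[OF _ _ AE_pmfI])
    fix \<omega> assume "\<omega> \<in> set_pmf p"
    then have "((X \<omega>, Y \<omega>), T \<omega>) \<in> set_pmf (pair_pmf ?XY \<tau>)"
      unfolding indep[symmetric] by auto
    then have T_pos: "pmf \<tau> (T \<omega>) > 0" by (simp add: pmf_positive)
    have "pmf (map_pmf (\<lambda>\<omega>. (X \<omega>, Y \<omega>, T \<omega>)) p) (X \<omega>, Y \<omega>, T \<omega>)
          = pmf ?XY (X \<omega>, Y \<omega>) * pmf \<tau> (T \<omega>)"
      using pmf_map_inj'[OF \<open>inj assoc\<close>, of _ "((X \<omega>, Y \<omega>), T \<omega>)"]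
      unfolding joint by (simp add: assoc_def pmf_pair)
    then show "log b (pmf (map_pmf (\<lambda>\<omega>. (X \<omega>, Y \<omega>, T \<omega>)) p) (X \<omega>, Y \<omega>, T \<omega>) /
          (pmf (map_pmf X p) (X \<omega>) * pmf (map_pmf (\<lambda>\<omega>. (Y \<omega>, T \<omega>)) p) (Y \<omega>, T \<omega>))) =
         log b (pmf ?XY (X \<omega>, Y \<omega>) / (pmf (map_pmf X p) (X \<omega>) * pmf (map_pmf Y p) (Y \<omega>)))"
      using T_pos by (simp add: right pmf_pair)
  qed simp_all
qed

lemma conditional_mutual_information_pmf:
  fixes p :: "'o pmf" and X :: "'o \<Rightarrow> 'x::countable" and Y :: "'o \<Rightarrow> 'y::countable"
    and Z :: "'o \<Rightarrow> 'z::countable"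
  shows "CMI b p X Y Z = MI b p X (\<lambda>\<omega>. (Y \<omega>, Z \<omega>)) - MI b p X Z"
  unfolding prob_space.conditional_mutual_information_def[OF prob_space_measure_pmf]
  by (simp add: pair_measure_countable)

text \<open>Rectangles under a product distribution (no countability needed, unlike
  \<open>measure_pmf_prob_product\<close>).\<close>
lemma measure_pair_pmf_Times: "measure (pair_pmf A B) (X \<times> Y) = measure A X * measure B Y"
proof -
  have "(\<lambda>(a, b). (a \<in> X, b \<in> Y)) -` {(True, True)} = X \<times> Y" by auto
  then have "measure (pair_pmf A B) (X \<times> Y)
             = pmf (map_pmf (\<lambda>(a, b). (a \<in> X, b \<in> Y)) (pair_pmf A B)) (True, True)"
    by (simp add: pmf_map)
  also have "\<dots> = pmf (pair_pmf (map_pmf (\<lambda>a. a \<in> X) A) (map_pmf (\<lambda>b. b \<in> Y) B)) (True, True)"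
    by (simp add: map_pair)
  also have "\<dots> = measure A X * measure B Y"
    by (simp add: pmf_pair pmf_map vimage_def)
  finally show ?thesis .
qed

lemma expectation_pair_pmf_mult:
  fixes f :: "'a \<Rightarrow> real" and g :: "'b \<Rightarrow> real"
  assumes "finite (set_pmf A)" "finite (set_pmf B)"
  shows "measure_pmf.expectation (pair_pmf A B) (\<lambda>x. f (fst x) * g (snd x))
         = measure_pmf.expectation A f * measure_pmf.expectation B g"
proof -
  have "measure_pmf.expectation (pair_pmf A B) (\<lambda>x. f (fst x) * g (snd x))
        = (\<Sum>x\<in>set_pmf A \<times> set_pmf B. pmf (pair_pmf A B) x * (f (fst x) * g (snd x)))"
    by (subst integral_measure_pmf_real[where A="set_pmf A \<times> set_pmf B"])
       (auto simp: assms mult.commute)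
  also have "\<dots> = (\<Sum>a\<in>set_pmf A. \<Sum>b\<in>set_pmf B. (pmf A a * f a) * (pmf B b * g b))"
    by (simp add: sum.cartesian_product case_prod_unfold pmf_pair[symmetric] algebra_simps)
  also have "\<dots> = (\<Sum>a\<in>set_pmf A. pmf A a * f a) * (\<Sum>b\<in>set_pmf B. pmf B b * g b)"
    by (simp add: sum_product)
  also have "\<dots> = measure_pmf.expectation A f * measure_pmf.expectation B g"
    by (subst (1 2) integral_measure_pmf_real[where A="set_pmf _"])
       (auto simp: assms mult.commute)
  finally show ?thesis .
qed

definition erasure_view :: "('s \<Rightarrow> bool) \<Rightarrow> ('z \<times> 'x) \<times> 's \<Rightarrow> 'z \<times> 'x option \<times> 's" where
  "erasure_view c = (\<lambda>((z, x), s). (z, if c s then Some x else None, s))"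

lemma pmf_erasure_view:
  "pmf (map_pmf (erasure_view c) (pair_pmf \<rho> \<sigma>)) (erasure_view c ((z, x), s))
   = pmf \<sigma> s * (if c s then pmf \<rho> (z, x) else pmf (map_pmf fst \<rho>) z)"
proof (cases "c s")
  case True
  then have "erasure_view c -` {erasure_view c ((z, x), s)} = {(z, x)} \<times> {s}"
    by (auto simp: erasure_view_def split: if_splits)
  then show ?thesis using True
    by (simp add: pmf_map measure_pmf_single pmf_pair mult.commute)
next
  case False
  then have "erasure_view c -` {erasure_view c ((z, x), s)} = fst -` {z} \<times> {s}"
    by (auto simp: erasure_view_def split: if_splits)
  then show ?thesis using False
    by (simp add: pmf_map measure_pair_pmf_Times measure_pmf_single mult.commute)
qed

lemma neg_entropy_erasure_view:
  fixes \<rho> :: "('z \<times> 'x) pmf" and \<sigma> :: "'s pmf"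
  assumes fin_\<rho>: "finite (set_pmf \<rho>)" and fin_\<sigma>: "finite (set_pmf \<sigma>)"
  shows "neg_entropy b (map_pmf (erasure_view c) (pair_pmf \<rho> \<sigma>))
         = neg_entropy b \<sigma> + measure \<sigma> {s. c s} * neg_entropy b \<rho>
           + (1 - measure \<sigma> {s. c s}) * neg_entropy b (map_pmf fst \<rho>)"
proof -
  let ?q = "pair_pmf \<rho> \<sigma>" and ?G = "erasure_view c"
  let ?I = "\<lambda>s. indicator {s. c s} s :: real"
  let ?l\<sigma> = "\<lambda>s. log b (pmf \<sigma> s)" and ?l\<rho> = "\<lambda>u. log b (pmf \<rho> u)"
    and ?lz = "\<lambda>u. log b (pmf (map_pmf fst \<rho>) (fst u))"
  have fin_q: "finite (set_pmf ?q)" using fin_\<rho> fin_\<sigma> by simp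
  have "neg_entropy b (map_pmf ?G ?q)
        = measure_pmf.expectation ?q (\<lambda>w. log b (pmf (map_pmf ?G ?q) (?G w)))"
    unfolding neg_entropy_def by simp
  also have "\<dots> = measure_pmf.expectation ?q
                   (\<lambda>w. ?l\<sigma> (snd w) + ?l\<rho> (fst w) * ?I (snd w) + ?lz (fst w) * (1 - ?I (snd w)))"
  proof (rule integral_cong_AE[OF _ _ AE_pmfI])
    fix w assume w: "w \<in> set_pmf ?q"
    obtain z x s where w_eq: "w = ((z, x), s)" by (metis prod.collapse)
    have "pmf \<sigma> s > 0" "pmf \<rho> (z, x) > 0" "pmf (map_pmf fst \<rho>) z > 0"
      using w pmf_map_pmf_pos[of "(z, x)" \<rho> fst] by (auto simp: w_eq pmf_positive)
    then show "log b (pmf (map_pmf ?G ?q) (?G w))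
               = ?l\<sigma> (snd w) + ?l\<rho> (fst w) * ?I (snd w) + ?lz (fst w) * (1 - ?I (snd w))"
      unfolding w_eq pmf_erasure_view by (simp add: log_mult indicator_def)
  qed simp_all
  also have "\<dots> = measure_pmf.expectation ?q (\<lambda>w. ?l\<sigma> (snd w))
                 + measure_pmf.expectation ?q (\<lambda>w. ?l\<rho> (fst w) * ?I (snd w))
                 + measure_pmf.expectation ?q (\<lambda>w. ?lz (fst w) * (1 - ?I (snd w)))"
    using fin_q by (simp add: Bochner_Integration.integral_add integrable_measure_pmf_finite)
  also have "\<dots> = neg_entropy b \<sigma> + neg_entropy b \<rho> * measure_pmf.expectation \<sigma> ?I
                 + neg_entropy b (map_pmf fst \<rho>) * measure_pmf.expectation \<sigma> (\<lambda>s. 1 - ?I s)"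
    using expectation_pair_pmf_mult[OF fin_\<rho> fin_\<sigma>, of ?l\<rho> ?I]
      expectation_pair_pmf_mult[OF fin_\<rho> fin_\<sigma>, of "\<lambda>u. ?lz u" "\<lambda>s. 1 - ?I s"]
    by (simp add: neg_entropy_def expectation_pair_pmf_snd[where f="?l\<sigma>"])
  also have "measure_pmf.expectation \<sigma> ?I = measure \<sigma> {s. c s}" by simp
  also have "measure_pmf.expectation \<sigma> (\<lambda>s. 1 - ?I s) = 1 - measure \<sigma> {s. c s}"
    by (subst Bochner_Integration.integral_diff) (auto simp: integrable_measure_pmf_finite fin_\<sigma>)
  finally show ?thesis by (simp add: algebra_simps)
qed

lemma indep_map_left:
  assumes "map_pmf (\<lambda>\<omega>. (Z \<omega>, S \<omega>)) p = pair_pmf (map_pmf Z p) \<sigma>"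
  shows "map_pmf (\<lambda>\<omega>. (F (Z \<omega>), S \<omega>)) p = pair_pmf (map_pmf (\<lambda>\<omega>. F (Z \<omega>)) p) \<sigma>"
  using arg_cong[OF assms, of "map_pmf (\<lambda>(z, s). (F z, id s))"]
  by (simp add: map_pair map_pmf_comp)

lemma neg_entropy_erased_observation:
  fixes p :: "'o pmf" and Z :: "'o \<Rightarrow> 'z" and X :: "'o \<Rightarrow> 'x" and S :: "'o \<Rightarrow> 's"
  assumes fin_Z: "finite (Z ` set_pmf p)" and fin_X: "finite (X ` set_pmf p)"
    and fin_\<sigma>: "finite (set_pmf \<sigma>)"
    and indep: "map_pmf (\<lambda>\<omega>. ((Z \<omega>, X \<omega>), S \<omega>)) p = pair_pmf (map_pmf (\<lambda>\<omega>. (Z \<omega>, X \<omega>)) p) \<sigma>"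
  shows "neg_entropy b (map_pmf (\<lambda>\<omega>. (Z \<omega>, if c (S \<omega>) then Some (X \<omega>) else None, S \<omega>)) p)
         = neg_entropy b \<sigma> + measure \<sigma> {s. c s} * neg_entropy b (map_pmf (\<lambda>\<omega>. (Z \<omega>, X \<omega>)) p)
           + (1 - measure \<sigma> {s. c s}) * neg_entropy b (map_pmf Z p)"
proof -
  define \<rho> where "\<rho> = map_pmf (\<lambda>\<omega>. (Z \<omega>, X \<omega>)) p"
  have fin_\<rho>: "finite (set_pmf \<rho>)" unfolding \<rho>_def
    by (simp, rule finite_subset[OF _ finite_cartesian_product[OF fin_Z fin_X]]) auto
  have joint: "map_pmf (\<lambda>\<omega>. (Z \<omega>, if c (S \<omega>) then Some (X \<omega>) else None, S \<omega>)) p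
               = map_pmf (erasure_view c) (pair_pmf \<rho> \<sigma>)"
    unfolding \<rho>_def indep[symmetric] map_pmf_comp by (simp add: erasure_view_def)
  have marginal: "map_pmf fst \<rho> = map_pmf Z p" by (simp add: \<rho>_def map_pmf_comp)
  show ?thesis
    unfolding \<rho>_def[symmetric] joint neg_entropy_erasure_view[OF fin_\<rho> fin_\<sigma>] marginal ..
qed

lemma mutual_information_erasure_increment:
  fixes p :: "'o pmf" and W :: "'o \<Rightarrow> 'w::countable" and P :: "'o \<Rightarrow> 'p::countable"
    and X :: "'o \<Rightarrow> 'x::countable" and S :: "'o \<Rightarrow> 's::countable" and \<sigma> :: "'s pmf"
  assumes b: "1 < b"
    and fin_W: "finite (W ` set_pmf p)" and fin_P: "finite (P ` set_pmf p)"
    and fin_X: "finite (X ` set_pmf p)" and fin_\<sigma>: "finite (set_pmf \<sigma>)"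
    and indep: "map_pmf (\<lambda>\<omega>. ((W \<omega>, P \<omega>, X \<omega>), S \<omega>)) p
                = pair_pmf (map_pmf (\<lambda>\<omega>. (W \<omega>, P \<omega>, X \<omega>)) p) \<sigma>"
  shows "MI b p W (\<lambda>\<omega>. (P \<omega>, if c (S \<omega>) then Some (X \<omega>) else None, S \<omega>)) - MI b p W P
         = measure \<sigma> {s. c s} * CMI b p X W P"
proof -
  let ?m = "measure \<sigma> {s. c s}" and ?N = "neg_entropy b"
  let ?Y = "\<lambda>\<omega>. if c (S \<omega>) then Some (X \<omega>) else None" and ?WP = "\<lambda>\<omega>. (W \<omega>, P \<omega>)"
  have fin_WP: "finite (?WP ` set_pmf p)"
    by (rule finite_subset[OF _ finite_cartesian_product[OF fin_W fin_P]]) auto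
  have "map_pmf S p = \<sigma>"
    using arg_cong[OF indep, of "map_pmf snd"] by (simp add: map_pmf_comp map_snd_pair_pmf)
  then have fin_S: "finite (S ` set_pmf p)" using fin_\<sigma> by auto
  have fin_Y: "finite (?Y ` set_pmf p)"
    by (rule finite_subset[of _ "insert None (Some ` X ` set_pmf p)"]) (auto simp: fin_X)
  have fin_PYS: "finite ((\<lambda>\<omega>. (P \<omega>, ?Y \<omega>, S \<omega>)) ` set_pmf p)"
    by (rule finite_subset[OF _ finite_cartesian_product[OF fin_P
          finite_cartesian_product[OF fin_Y fin_S]]]) auto
  have joint_WP: "?N (map_pmf (\<lambda>\<omega>. (W \<omega>, P \<omega>, ?Y \<omega>, S \<omega>)) p)
                  = ?N \<sigma> + ?m * ?N (map_pmf (\<lambda>\<omega>. (?WP \<omega>, X \<omega>)) p) + (1 - ?m) * ?N (map_pmf ?WP p)"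
  proof -
    define assoc :: "('w \<times> 'p) \<times> 'x option \<times> 's \<Rightarrow> 'w \<times> 'p \<times> 'x option \<times> 's"
      where "assoc = (\<lambda>((w, q), y, s). (w, q, y, s))"
    have "inj assoc" by (auto simp: inj_def assoc_def)
    moreover have "map_pmf (\<lambda>\<omega>. (W \<omega>, P \<omega>, ?Y \<omega>, S \<omega>)) p
                   = map_pmf assoc (map_pmf (\<lambda>\<omega>. (?WP \<omega>, ?Y \<omega>, S \<omega>)) p)"
      by (simp add: map_pmf_comp assoc_def)
    ultimately have "?N (map_pmf (\<lambda>\<omega>. (W \<omega>, P \<omega>, ?Y \<omega>, S \<omega>)) p)
                     = ?N (map_pmf (\<lambda>\<omega>. (?WP \<omega>, ?Y \<omega>, S \<omega>)) p)"
      by (simp add: neg_entropy_map_inj)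
    then show ?thesis using indep_map_left[OF indep, of "\<lambda>(w, q, x). ((w, q), x)"]
      by (simp add: neg_entropy_erased_observation[OF fin_WP fin_X fin_\<sigma>])
  qed
  have joint_P: "?N (map_pmf (\<lambda>\<omega>. (P \<omega>, ?Y \<omega>, S \<omega>)) p)
                 = ?N \<sigma> + ?m * ?N (map_pmf (\<lambda>\<omega>. (P \<omega>, X \<omega>)) p) + (1 - ?m) * ?N (map_pmf P p)"
    using indep_map_left[OF indep, of "\<lambda>(w, q, x). (q, x)"]
    by (simp add: neg_entropy_erased_observation[OF fin_P fin_X fin_\<sigma>])
  have swap: "?N (map_pmf (\<lambda>\<omega>. (X \<omega>, V \<omega>)) p) = ?N (map_pmf (\<lambda>\<omega>. (V \<omega>, X \<omega>)) p)" for V :: "'o \<Rightarrow> 'v"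
    using neg_entropy_map_inj[OF inj_swap, of b "map_pmf (\<lambda>\<omega>. (V \<omega>, X \<omega>)) p"]
    by (simp add: map_pmf_comp)
  show ?thesis
    unfolding conditional_mutual_information_pmf
      mutual_information_neg_entropy[OF b fin_W fin_PYS] mutual_information_neg_entropy[OF b fin_W fin_P]
      mutual_information_neg_entropy[OF b fin_X fin_WP] mutual_information_neg_entropy[OF b fin_X fin_P]
      joint_WP joint_P swap
    by (simp add: algebra_simps)
qed

text \<open>Sample points of the converse setting: \<open>(W1, W2, \<Theta>A, \<Theta>C, S)\<close>.\<close>
type_synonym ('f, 'ta, 'tc) outcome = "'f list \<times> 'f list \<times> 'ta \<times> 'tc \<times> (nat \<Rightarrow> bool \<times> bool)"

lemma finite_lists_of_length: "finite {xs :: 'a::finite list. length xs = k}"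
  using finite_lists_length_eq[of "UNIV :: 'a set" k] by simp

lemma measure_state_pmf_calvin:
  assumes "0 \<le> d2" "d2 \<le> 1"
  shows "measure (state_pmf d1 d2) {s. snd s} = 1 - d2"
proof -
  have "{s :: bool \<times> bool. snd s} = UNIV \<times> {True}" by auto
  then show ?thesis unfolding state_pmf_def using assms
    by (simp add: measure_pair_pmf_Times measure_pmf_single)
qed

lemma length_W1_conv_space:
  fixes \<omega> :: "('f::{finite,field}, 'ta, 'tc) outcome"
  assumes "\<omega> \<in> set_pmf (conv_space L N1 N2 d1 d2 PA PC n)"
  shows "length (W1 \<omega>) = L * N1"
proof -
  have "{w :: 'f list. length w = L * N1} \<noteq> {}"
    by (metis (mono_tags) empty_iff length_replicate mem_Collect_eq)
  then show ?thesis using assms finite_lists_of_length[of "L * N1", where 'a='f]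
    unfolding conv_space_def W1_def by (auto simp: set_pmf_of_set)
qed

text \<open>Alice's knowledge after \<open>k\<close> packets: the messages, her randomness and the
  acknowledged states \<open>S^k\<close>.  Packet \<open>k + 1\<close> is a function of it.\<close>
definition alice_view ::
  "nat \<Rightarrow> ('f, 'ta, 'tc) outcome \<Rightarrow> 'f list \<times> 'f list \<times> 'ta \<times> (bool \<times> bool) list"
  where "alice_view k \<omega> = (fst \<omega>, fst (snd \<omega>), fst (snd (snd \<omega>)), S_upto \<omega> k)"

text \<open>Calvin's observation \<open>(Y2^k, S^k)\<close>, recomputed from Alice's view.\<close>
definition calvin_view ::
  "(nat \<Rightarrow> 'f list \<Rightarrow> 'f list \<Rightarrow> 'ta \<Rightarrow> (bool \<times> bool) list \<Rightarrow> 'f list) \<Rightarrow>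
   'f list \<times> 'f list \<times> 'ta \<times> (bool \<times> bool) list \<Rightarrow> 'f list option list \<times> (bool \<times> bool) list"
  where "calvin_view f v = (case v of (w1, w2, t, s) \<Rightarrow>
           (map (\<lambda>j. if snd (s ! (j - 1)) then Some (f j w1 w2 t (take (j - 1) s)) else None)
              [1..<Suc (length s)], s))"

lemma calvin_view_alice_view: "calvin_view f (alice_view k \<omega>) = (Y2_upto f \<omega> k, S_upto \<omega> k)"
proof -
  let ?s = "S_upto \<omega> k"
  let ?y = "\<lambda>j. if snd (?s ! (j - 1))
                 then Some (f j (fst \<omega>) (fst (snd \<omega>)) (fst (snd (snd \<omega>))) (take (j - 1) ?s)) else None"
  have "?y j = Y2 f \<omega> j" if "j \<in> set [1..<Suc k]" for j
  proof -
    from that have "1 \<le> j" "j \<le> k" by auto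
    then have "?s ! (j - 1) = snd (snd (snd (snd \<omega>))) j"
      and "take (j - 1) ?s = S_upto \<omega> (j - 1)"
      by (simp_all add: S_upto_def take_map take_upt del: upt_Suc)
    then show ?thesis by (simp add: Y2_def Xin_def)
  qed
  then have "map ?y [1..<Suc k] = Y2_upto f \<omega> k"
    unfolding Y2_upto_def by (rule map_cong[OF refl])
  moreover have "length ?s = k" by (simp add: S_upto_def)
  ultimately show ?thesis by (simp add: calvin_view_def alice_view_def del: upt_Suc)
qed

lemma conv_space_state_indep:
  assumes k: "Suc k \<le> n"
  shows "map_pmf (\<lambda>\<omega>. (alice_view k \<omega>, snd (snd (snd (snd \<omega>))) (Suc k)))
           (conv_space L N1 N2 d1 d2 PA PC n)
         = pair_pmf (map_pmf (alice_view k) (conv_space L N1 N2 d1 d2 PA PC n)) (state_pmf d1 d2)"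
proof -
  let ?\<sigma> = "state_pmf d1 d2"
  have "{1..n} = insert (Suc k) ({1..n} - {Suc k})" using k by auto
  then have states: "Pi_pmf {1..n} (False, False) (\<lambda>_. ?\<sigma>)
      = do {y \<leftarrow> ?\<sigma>; g \<leftarrow> Pi_pmf ({1..n} - {Suc k}) (False, False) (\<lambda>_. ?\<sigma>);
            return_pmf (g(Suc k := y))}"
    by (metis Pi_pmf_insert' finite_Diff finite_atLeastAtMost Diff_iff insertI1)
  show ?thesis
    unfolding conv_space_def states pair_pmf_def map_pmf_def alice_view_def S_upto_def
    by (simp add: bind_assoc_pmf bind_return_pmf del: upt_Suc, intro bind_pmf_cong[OF refl])
       (rule bind_commute_pmf)
qed

lemma conv_space_ThC_indep:
  "map_pmf (\<lambda>\<omega>. (F (alice_view k \<omega>), ThC \<omega>)) (conv_space L N1 N2 d1 d2 PA PC n)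
   = pair_pmf (map_pmf (\<lambda>\<omega>. F (alice_view k \<omega>)) (conv_space L N1 N2 d1 d2 PA PC n)) PC"
  unfolding conv_space_def pair_pmf_def map_pmf_def ThC_def alice_view_def S_upto_def
  by (simp add: bind_assoc_pmf bind_return_pmf del: upt_Suc, intro bind_pmf_cong[OF refl])
     (rule bind_commute_pmf)

lemma calvin_information_increment:
  fixes f :: "nat \<Rightarrow> 'f::{finite,field} list \<Rightarrow> 'f list \<Rightarrow> 'ta::countable \<Rightarrow> (bool \<times> bool) list \<Rightarrow> 'f list"
    and PA :: "'ta pmf" and PC :: "'tc pmf" and L N1 N2 n k :: nat and d1 d2 b :: real
  assumes b: "1 < b" and d2: "0 \<le> d2" "d2 \<le> 1" and k: "Suc k \<le> n"
    and len_f: "\<And>i w1 w2 t s. length (f i w1 w2 t s) = L"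
  defines "p \<equiv> conv_space L N1 N2 d1 d2 PA PC n"
  shows "MI b p W1 (\<lambda>\<omega>. (Y2_upto f \<omega> (Suc k), S_upto \<omega> (Suc k)))
           - MI b p W1 (\<lambda>\<omega>. (Y2_upto f \<omega> k, S_upto \<omega> k))
         = (1 - d2) * CMI b p (\<lambda>\<omega>. Xin f \<omega> (Suc k)) W1 (\<lambda>\<omega>. (Y2_upto f \<omega> k, S_upto \<omega> k))"
proof -
  let ?\<sigma> = "state_pmf d1 d2"
  let ?P = "\<lambda>\<omega>. (Y2_upto f \<omega> k, S_upto \<omega> k)" and ?X = "\<lambda>\<omega>. Xin f \<omega> (Suc k)"
    and ?S = "\<lambda>\<omega>::('f, 'ta, 'tc) outcome. snd (snd (snd (snd \<omega>))) (Suc k)"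
  define extend :: "('f list option list \<times> (bool \<times> bool) list) \<times> 'f list option \<times> bool \<times> bool \<Rightarrow> _"
    where "extend = (\<lambda>((y, s), o', st). (y @ [o'], s @ [st]))"
  have "inj extend" by (auto simp: inj_def extend_def)
  have observed: "(\<lambda>\<omega>. (Y2_upto f \<omega> (Suc k), S_upto \<omega> (Suc k)))
                  = (\<lambda>\<omega>. extend (?P \<omega>, if snd (?S \<omega>) then Some (?X \<omega>) else None, ?S \<omega>))"
    by (simp add: fun_eq_iff extend_def Y2_upto_def S_upto_def Y2_def)
  txt \<open>\<open>W1\<close>, Calvin's past and \<open>X_{k+1}\<close> are functions of Alice's view, hence independent
    of the next state.\<close>
  define F where
    "F v = (fst v, calvin_view f v, case v of (w1, w2, t, s) \<Rightarrow> f (Suc k) w1 w2 t s)" for v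
  have F_alice: "F (alice_view k \<omega>) = (W1 \<omega>, ?P \<omega>, ?X \<omega>)" for \<omega>
    by (simp add: F_def calvin_view_alice_view) (simp add: alice_view_def W1_def Xin_def)
  have indep: "map_pmf (\<lambda>\<omega>. ((W1 \<omega>, ?P \<omega>, ?X \<omega>), ?S \<omega>)) p
               = pair_pmf (map_pmf (\<lambda>\<omega>. (W1 \<omega>, ?P \<omega>, ?X \<omega>)) p) ?\<sigma>"
    using indep_map_left[OF conv_space_state_indep[OF k], of F] by (simp add: F_alice p_def)
  have fin_W: "finite (W1 ` set_pmf p)"
    by (rule finite_subset[OF _ finite_lists_of_length[of "L * N1"]])
       (auto simp: p_def length_W1_conv_space)
  have fin_X: "finite (?X ` set_pmf p)"
    by (rule finite_subset[OF _ finite_lists_of_length[of L]]) (auto simp: Xin_def len_f)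
  have fin_P: "finite (?P ` set_pmf p)"
  proof (rule finite_subset[OF _ finite_cartesian_product])
    show "finite {ys. set ys \<subseteq> insert None (Some ` {xs :: 'f list. length xs = L}) \<and> length ys = k}"
      by (intro finite_lists_length_eq finite.insertI finite_imageI finite_lists_of_length)
    show "finite {ss :: (bool \<times> bool) list. length ss = k}" by (rule finite_lists_of_length)
  qed (auto simp: Y2_upto_def Y2_def Xin_def S_upto_def len_f)
  have "MI b p W1 (\<lambda>\<omega>. (Y2_upto f \<omega> (Suc k), S_upto \<omega> (Suc k)))
        = MI b p W1 (\<lambda>\<omega>. (?P \<omega>, if snd (?S \<omega>) then Some (?X \<omega>) else None, ?S \<omega>))"
    unfolding observed by (rule mutual_information_inj_right[OF b \<open>inj extend\<close>])
  also have "\<dots> = MI b p W1 ?P + measure ?\<sigma> {s. snd s} * CMI b p ?X W1 ?P"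
    using mutual_information_erasure_increment[OF b fin_W fin_P fin_X _ indep, of snd]
    by (simp add: finite_subset[OF subset_UNIV])
  finally show ?thesis using measure_state_pmf_calvin[OF d2] by simp
qed

lemma calvin_information_ignores_ThC:
  fixes f :: "nat \<Rightarrow> 'f::{finite,field} list \<Rightarrow> 'f list \<Rightarrow> 'ta::countable \<Rightarrow> (bool \<times> bool) list \<Rightarrow> 'f list"
    and PA :: "'ta pmf" and PC :: "'tc::countable pmf" and L N1 N2 n :: nat and d1 d2 b :: real
  assumes b: "1 < b"
  defines "p \<equiv> conv_space L N1 N2 d1 d2 PA PC n"
  shows "MI b p W1 (\<lambda>\<omega>. (Y2_upto f \<omega> n, S_upto \<omega> n, ThC \<omega>))
         = MI b p W1 (\<lambda>\<omega>. (Y2_upto f \<omega> n, S_upto \<omega> n))"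
proof -
  let ?P = "\<lambda>\<omega>. (Y2_upto f \<omega> n, S_upto \<omega> n)"
  define assoc :: "('f list option list \<times> (bool \<times> bool) list) \<times> 'tc \<Rightarrow> _"
    where "assoc = (\<lambda>((y, s), t). (y, s, t))"
  have "inj assoc" by (auto simp: inj_def assoc_def)
  have indep: "map_pmf (\<lambda>\<omega>. ((W1 \<omega>, ?P \<omega>), ThC \<omega>)) p = pair_pmf (map_pmf (\<lambda>\<omega>. (W1 \<omega>, ?P \<omega>)) p) PC"
    using conv_space_ThC_indep[of "\<lambda>v. (fst v, calvin_view f v)" n]
    by (simp add: calvin_view_alice_view p_def) (simp add: alice_view_def W1_def)
  have "MI b p W1 (\<lambda>\<omega>. (Y2_upto f \<omega> n, S_upto \<omega> n, ThC \<omega>)) = MI b p W1 (\<lambda>\<omega>. assoc (?P \<omega>, ThC \<omega>))"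
    by (simp add: assoc_def)
  also have "\<dots> = MI b p W1 (\<lambda>\<omega>. (?P \<omega>, ThC \<omega>))"
    by (rule mutual_information_inj_right[OF b \<open>inj assoc\<close>])
  also have "\<dots> = MI b p W1 ?P"
    by (rule mutual_information_indep_extra[OF b indep])
  finally show ?thesis .
qed

theorem lemma10:
  fixes f :: "nat \<Rightarrow> 'f::{finite,field} list \<Rightarrow> 'f list \<Rightarrow> 'ta::countable \<Rightarrow> (bool \<times> bool) list \<Rightarrow> 'f list"
    and PA :: "'ta pmf" and PC :: "'tc::countable pmf"
    and L N1 N2 n :: nat and d1 d2 \<epsilon> b :: real
  assumes "0 < d1" "d1 < 1" "0 < d2" "d2 < 1" "0 < \<epsilon>" "1 < b"
    and "\<And>i w1 w2 t s. length (f i w1 w2 t s) = L"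
    and "prob_space.mutual_information (measure_pmf (conv_space L N1 N2 d1 d2 PA PC n)) b
           (count_space UNIV) (count_space UNIV)
           W1 (\<lambda>\<omega>. (Y2_upto f \<omega> n, S_upto \<omega> n, ThC \<omega>)) < \<epsilon>"
  shows "(\<Sum>i = 1..n. prob_space.conditional_mutual_information
            (measure_pmf (conv_space L N1 N2 d1 d2 PA PC n)) b
            (count_space UNIV) (count_space UNIV) (count_space UNIV)
            (\<lambda>\<omega>. Xin f \<omega> i) W1 (\<lambda>\<omega>. (Y2_upto f \<omega> (i - 1), S_upto \<omega> (i - 1))))
         < \<epsilon> / (1 - d2)"
proof -
  note b = \<open>1 < b\<close> and len_f = \<open>\<And>i w1 w2 t s. length (f i w1 w2 t s) = L\<close>
  define p :: "('f, 'ta, 'tc) outcome pmf" where "p = conv_space L N1 N2 d1 d2 PA PC n"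
  define T where "T k = MI b p W1 (\<lambda>\<omega>. (Y2_upto f \<omega> k, S_upto \<omega> k))" for k
  have increment: "CMI b p (\<lambda>\<omega>. Xin f \<omega> i) W1 (\<lambda>\<omega>. (Y2_upto f \<omega> (i - 1), S_upto \<omega> (i - 1)))
                   = (T i - T (i - 1)) / (1 - d2)" if i: "i \<in> {1..n}" for i
  proof -
    obtain k where "i = Suc k" "Suc k \<le> n" using i by (cases i) auto
    then show ?thesis
      using calvin_information_increment[OF b _ _ _ len_f, of d2 k n N1 N2 d1 PA PC] assms(3,4)
      by (simp add: T_def p_def)
  qed
  have "T 0 = 0"
    unfolding T_def by (simp add: Y2_upto_def S_upto_def mutual_information_const[OF b])
  have "T n < \<epsilon>"
    using assms(8) calvin_information_ignores_ThC[OF b, of L N1 N2 d1 d2 PA PC n f]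
    by (simp add: T_def p_def)
  have "(\<Sum>i = 1..n. CMI b p (\<lambda>\<omega>. Xin f \<omega> i) W1 (\<lambda>\<omega>. (Y2_upto f \<omega> (i - 1), S_upto \<omega> (i - 1))))
        = (\<Sum>i = 1..n. (T i - T (i - 1)) / (1 - d2))"
    by (rule sum.cong[OF refl increment])
  also have "\<dots> = (\<Sum>i = Suc 0..n. T i - T (i - 1)) / (1 - d2)"
    by (simp add: sum_divide_distrib)
  also have "\<dots> = (T n - T 0) / (1 - d2)" using sum_telescope''[of 0 n T] by simp
  also have "\<dots> < \<epsilon> / (1 - d2)"
    using \<open>T 0 = 0\<close> \<open>T n < \<epsilon>\<close> assms(4) by (simp add: divide_strict_right_mono)
  finally show ?thesis unfolding p_def .
qed

end
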